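(* For unitary modified types $\boldsymbol\mu,\boldsymbol\nu,\boldsymbol\lambda$: $r_{\boldsymbol\mu,\boldsymbol\nu}^{\boldsymbol\lambda}=0$ whenever $|\boldsymbol\lambda|>|\boldsymbol\mu|+|\boldsymbol\nu|$, and whenever $|\boldsymbol\lambda|=|\boldsymbol\mu|+|\boldsymbol\nu|$ the polynomial $r_{\boldsymbol\mu,\boldsymbol\nu}^{\boldsymbol\lambda}$ is a constant lying in $\mathbb{Z}$. Equivalently, the algebra with basis $\{K_{\boldsymbol\mu}\}$ over $\mathcal{R}_{-q}$ and multiplication $K_{\boldsymbol\mu}K_{\boldsymbol\nu}=\sum_{\boldsymbol\lambda}r_{\boldsymbol\mu,\boldsymbol\nu}^{\boldsymbol\lambda}K_{\boldsymbol\lambda}$ is filtered with $K_{\boldsymbol\mu}$ in degree $|\boldsymbol\mu|$, and its associated graded algebra has integer structure constants.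
   Context: $q$ is a fixed prime power, $\sigma(z)=z^q$ on $\mathbb{F}_{q^2}$. $U_n(\mathbb{F}_q)=\{g\in GL_n(\mathbb{F}_{q^2}): g^T\sigma(g)=\mathrm{Id}\}$, embedded in $U_{n+1}(\mathbb{F}_q)$ by $g\mapsto\operatorname{diag}(g,1)$. Elements $g\in U_n(\mathbb{F}_q)$, $g'\in U_{n'}(\mathbb{F}_q)$ have the same unitary modified type if for some $N\ge n,n'$ their images in $U_N(\mathbb{F}_q)$ are conjugate in $U_N(\mathbb{F}_q)$; a unitary modified type is such an equivalence class, with size $|\boldsymbol\mu|=\operatorname{rank}(g-\mathrm{Id})$ for $g$ in the class. $X_{\boldsymbol\mu,n}$ is the sum of all elements of $U_n(\mathbb{F}_q)$ of modified type $\boldsymbol\mu$. $[n]_{-q}=((-q)^n-1)/(-q-1)$; $\mathcal{R}_{-q}$ is the $\mathbb{Z}[q,q^{-1}]$-span in $\mathbb{Q}[x]$ of $\binom{x}{k}_{-q}=\frac{x(x-[1]_{-q})\cdots(x-[k-1]_{-q})}{(-q)^{k(k-1)/2}[k]_{-q}!}$. The polynomials $r_{\boldsymbol\mu,\boldsymbol\nu}^{\boldsymbol\lambda}\in\mathcal{R}_{-q}$ are those with $X_{\boldsymbol\mu,n}X_{\boldsymbol\nu,n}=\sum_{\boldsymbol\lambda}r_{\boldsymbol\mu,\boldsymbol\nu}^{\boldsymbol\lambda}([n]_{-q})X_{\boldsymbol\lambda,n}$ for all $n\ge0$. *)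

theory Defs
  imports "Jordan_Normal_Form.DL_Rank" "HOL-Computational_Algebra.Polynomial"
          "HOL-Computational_Algebra.Primes"
begin

text \<open>Throughout, the finite field F_{q^2} is a finite field type 'a with CARD('a) = q^2,
  and the Frobenius is sigma z = z^q.\<close>

definition prime_power :: "nat \<Rightarrow> bool" where
  "prime_power q \<longleftrightarrow> (\<exists>p k. prime p \<and> k > 0 \<and> q = p ^ k)"

definition frob :: "nat \<Rightarrow> 'a::field mat \<Rightarrow> 'a mat" where
  "frob q g = map_mat (\<lambda>z. z ^ q) g"

definition unitary_group :: "nat \<Rightarrow> nat \<Rightarrow> 'a::field mat set" where
  "unitary_group q n = {g \<in> carrier_mat n n. invertible_mat g \<and>
      transpose_mat g * frob q g = 1\<^sub>m n}"

text \<open>Embedding U_n into U_N via g \<mapsto> diag(g, Id_{N-n}) (iterate of g \<mapsto> diag(g,1)).\<close>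
definition embed_mat :: "nat \<Rightarrow> nat \<Rightarrow> 'a::field mat \<Rightarrow> 'a mat" where
  "embed_mat n N g = four_block_mat g (0\<^sub>m n (N - n)) (0\<^sub>m (N - n) n) (1\<^sub>m (N - n))"

definition conj_in :: "'a::field mat set \<Rightarrow> 'a mat \<Rightarrow> 'a mat \<Rightarrow> bool" where
  "conj_in G a b \<longleftrightarrow> (\<exists>h\<in>G. \<exists>hi\<in>G. h * hi = 1\<^sub>m (dim_row h) \<and> h * a * hi = b)"

definition same_utype :: "nat \<Rightarrow> nat \<times> 'a::field mat \<Rightarrow> nat \<times> 'a mat \<Rightarrow> bool" where
  "same_utype q x y \<longleftrightarrow> (case x of (n, g) \<Rightarrow> case y of (n', g') \<Rightarrow>
      g \<in> unitary_group q n \<and> g' \<in> unitary_group q n' \<and>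
      (\<exists>N \<ge> max n n'. conj_in (unitary_group q N) (embed_mat n N g) (embed_mat n' N g')))"

definition utype :: "nat \<Rightarrow> nat \<Rightarrow> 'a::field mat \<Rightarrow> (nat \<times> 'a mat) set" where
  "utype q n g = {y. same_utype q (n, g) y}"

definition utypes :: "nat \<Rightarrow> 'a::field itself \<Rightarrow> (nat \<times> 'a mat) set set" where
  "utypes q _ = {utype q n g | n g. g \<in> unitary_group q n}"

definition utype_size :: "(nat \<times> 'a::field mat) set \<Rightarrow> nat" where
  "utype_size mu = (SOME r. \<exists>(n, g) \<in> mu. r = vec_space.rank n (g - 1\<^sub>m n))"

text \<open>Coefficient of h in X_{mu,n} X_{nu,n} in the group algebra Z[U_n].\<close>
definition prod_coeff ::
  "nat \<Rightarrow> nat \<Rightarrow> (nat \<times> 'a::field mat) set \<Rightarrow> (nat \<times> 'a mat) set \<Rightarrow> 'a mat \<Rightarrow> nat" where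
  "prod_coeff q n mu nu h = card {(a, b). a \<in> unitary_group q n \<and> b \<in> unitary_group q n \<and>
      utype q n a = mu \<and> utype q n b = nu \<and> a * b = h}"

definition qint :: "nat \<Rightarrow> nat \<Rightarrow> rat" where
  "qint q n = ((- of_nat q) ^ n - 1) / (- of_nat q - 1)"

definition qfact :: "nat \<Rightarrow> nat \<Rightarrow> rat" where
  "qfact q k = (\<Prod>i\<in>{1..k}. qint q i)"

definition qbinom_poly :: "nat \<Rightarrow> nat \<Rightarrow> rat poly" where
  "qbinom_poly q k = Polynomial.smult (inverse ((- of_nat q) ^ (k * (k - 1) div 2) * qfact q k))
      (\<Prod>i<k. [:- qint q i, 1:])"

text \<open>Z[q, q^{-1}] as a subset of Q (q a fixed number).\<close>
definition laurent_ints :: "nat \<Rightarrow> rat set" where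
  "laurent_ints q = {of_int m / of_nat q ^ j | m j. True}"

definition R_minus_q :: "nat \<Rightarrow> rat poly set" where
  "R_minus_q q = {(\<Sum>k<K. Polynomial.smult (c k) (qbinom_poly q k)) | K c. \<forall>k<K. c k \<in> laurent_ints q}"

end

theory Submission
  imports Defs "Jordan_Normal_Form.Matrix_Kernel"
begin

text \<open>Writing \<open>a b - 1 = (a - 1) b + (b - 1)\<close> gives \<open>rank (a b - 1) \<le> rank (a - 1) + rank (b - 1)\<close>,
  so for \<open>|\<lambda>| > |\<mu>| + |\<nu>|\<close> no element of type \<open>\<lambda>\<close> factors as a product of elements of types
  \<open>\<mu>\<close> and \<open>\<nu>\<close>: the structure polynomial vanishes at every \<open>[n]\<^sub>-\<^sub>q\<close>, hence is zero.
  If \<open>|\<lambda>| = |\<mu>| + |\<nu>|\<close> and \<open>A B = diag(h, 1)\<close> in \<open>U\<^sub>n\<^sub>+\<^sub>1\<close>, then \<open>B\<close> fixes the last basis vector \<open>e\<close>: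
  otherwise \<open>(B - 1) e\<close> is a nonzero vector in the column spaces of both \<open>A - 1\<close> and \<open>B - 1\<close>,
  and the rank inequality becomes strict. So \<open>A\<close> fixes \<open>e\<close> too, and by unitarity both are
  block diagonal. Hence the number of such factorizations does not depend on \<open>n\<close>, and the
  structure polynomial is this integer constant.\<close>

context vec_space
begin

lemma lin_indpt_empty: "lin_indpt {}"
  by (metis (no_types) empty_subsetI fin_dim finite_basis_exists subset_li_is_li vec_vs
      vectorspace.basis_def)

lemma lin_indpt_singleton:
  assumes "w \<in> carrier_vec n" "w \<noteq> 0\<^sub>v n"
  shows "lin_indpt {w}"
  using assms lin_dep_iff_in_span[of "{}" w] lin_indpt_empty span_empty by auto

lemma span_basis_extending:
  assumes S: "finite S" "S \<subseteq> carrier_vec n" and B: "B \<subseteq> S" "lin_indpt B"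
  obtains U where "B \<subseteq> U" "U \<subseteq> S" "S \<subseteq> span U"
    "card U = vectorspace.dim class_ring (span_vs S)"
proof -
  obtain U where U: "maximal U (\<lambda>T. T \<subseteq> S \<and> lin_indpt T)" "B \<subseteq> U"
    using maximal_exists_superset[of S "\<lambda>T. T \<subseteq> S \<and> lin_indpt T" B] S B by blast
  have US: "U \<subseteq> S" and li: "lin_indpt U" using U(1) unfolding maximal_def by auto
  have "s \<in> span U" if s: "s \<in> S" for s
  proof (rule ccontr)
    assume ns: "s \<notin> span U"
    have "s \<notin> U" using ns US S in_own_span[of U] by auto
    then have "lin_indpt (insert s U)"
      using lin_dep_iff_in_span[of U s] ns li US S s by auto
    then have "insert s U = U" using U(1) US s unfolding maximal_def by blast
    then show False using \<open>s \<notin> U\<close> by auto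
  qed
  then have "S \<subseteq> span U" by blast
  with that[OF U(2) US] show thesis using dim_span[OF S(2,1) U(1)] by simp
qed

lemma dim_span_le_card:
  assumes "finite S" "S \<subseteq> carrier_vec n"
  shows "vectorspace.dim class_ring (span_vs S) \<le> card S"
proof -
  obtain U where "U \<subseteq> S" "card U = vectorspace.dim class_ring (span_vs S)"
    using span_basis_extending[OF assms empty_subsetI lin_indpt_empty] by metis
  then show ?thesis using card_mono[OF assms(1)] by metis
qed

lemma dim_span_mono:
  assumes S: "finite S" "S \<subseteq> carrier_vec n" and T: "finite T" "T \<subseteq> carrier_vec n"
    and sub: "span S \<subseteq> span T"
  shows "vectorspace.dim class_ring (span_vs S) \<le> vectorspace.dim class_ring (span_vs T)"
proof -
  have sS: "subspace class_ring (span S) V" and sT: "subspace class_ring (span T) V"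
    using S T span_is_subspace by auto
  have "vectorspace class_ring (vs (span T))" using sT subspace_is_vs by auto
  from vectorspace.subspace_dim[OF this nested_subspaces[OF sT sS sub]]
  show ?thesis using fin_dim_span S T by auto
qed

lemma cols_subset_carrier: "A \<in> carrier_mat n m \<Longrightarrow> set (cols A) \<subseteq> carrier_vec n"
  by (metis carrier_matD(1) cols_dim)

lemma rank_le_card_of_cols_subset_span:
  assumes M: "M \<in> carrier_mat n m" and S: "finite S" "S \<subseteq> carrier_vec n"
    and sub: "set (cols M) \<subseteq> span S"
  shows "rank M \<le> card S"
proof -
  have "rank M \<le> vectorspace.dim class_ring (span_vs S)"
    unfolding rank_def
    by (rule dim_span_mono[OF _ cols_subset_carrier[OF M] S span_subsetI[OF S(2) sub]]) simp
  then show ?thesis using dim_span_le_card[OF S] by auto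
qed

lemma cols_mult_add_subset_span:
  assumes X: "X \<in> carrier_mat n k" and Z: "Z \<in> carrier_mat k m" and Y: "Y \<in> carrier_mat n m"
    and S: "S \<subseteq> carrier_vec n"
    and sX: "set (cols X) \<subseteq> span S" and sY: "set (cols Y) \<subseteq> span S"
  shows "set (cols (X * Z + Y)) \<subseteq> span S"
proof
  fix x assume "x \<in> set (cols (X * Z + Y))"
  then obtain j where j: "j < m" and xj: "x = col (X * Z + Y) j"
    using X Y Z by (auto simp: in_set_conv_nth)
  have x: "x = X *\<^sub>v col Z j + col Y j"
    unfolding xj using X Y Z j by (intro eq_vecI, auto simp: col_mult2)
  have "X *\<^sub>v col Z j \<in> col_space X"
    unfolding col_space_eq[OF X] using X Z j by auto
  then have "X *\<^sub>v col Z j \<in> span S"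
    using span_subsetI[OF S sX] unfolding col_space_def by auto
  moreover have "col Y j \<in> set (cols Y)"
    using Y j by (auto simp: in_set_conv_nth intro!: exI[of _ j])
  then have "col Y j \<in> span S" using sY by auto
  ultimately show "x \<in> span S" unfolding x using span_add1[OF S] by simp
qed

lemma rank_mult_add_le:
  assumes X: "X \<in> carrier_mat n k" and Z: "Z \<in> carrier_mat k m" and Y: "Y \<in> carrier_mat n m"
  shows "rank (X * Z + Y) \<le> rank X + rank Y"
proof -
  obtain U1 where U1: "U1 \<subseteq> set (cols X)" "set (cols X) \<subseteq> span U1" "card U1 = rank X"
    using span_basis_extending[OF _ cols_subset_carrier[OF X] empty_subsetI lin_indpt_empty]
    unfolding rank_def by auto
  obtain U2 where U2: "U2 \<subseteq> set (cols Y)" "set (cols Y) \<subseteq> span U2" "card U2 = rank Y"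
    using span_basis_extending[OF _ cols_subset_carrier[OF Y] empty_subsetI lin_indpt_empty]
    unfolding rank_def by auto
  have S: "finite (U1 \<union> U2)" "U1 \<union> U2 \<subseteq> carrier_vec n"
    using U1 U2 cols_subset_carrier[OF X] cols_subset_carrier[OF Y]
      finite_subset[OF U1(1)] finite_subset[OF U2(1)] by auto
  have "set (cols X) \<subseteq> span (U1 \<union> U2)" "set (cols Y) \<subseteq> span (U1 \<union> U2)"
    using U1(2) U2(2) span_is_monotone[of U1 "U1 \<union> U2"] span_is_monotone[of U2 "U1 \<union> U2"] by auto
  moreover have "X * Z + Y \<in> carrier_mat n m" using X Z Y by auto
  ultimately have "rank (X * Z + Y) \<le> card (U1 \<union> U2)"
    using rank_le_card_of_cols_subset_span[OF _ S] cols_mult_add_subset_span[OF X Z Y S(2)]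
    by blast
  also have "\<dots> \<le> rank X + rank Y" using card_Un_le[of U1 U2] U1 U2 by simp
  finally show ?thesis .
qed

text \<open>A common nonzero vector of both column spaces is counted only once.\<close>

lemma rank_mult_add_less:
  assumes X: "X \<in> carrier_mat n k" and Z: "Z \<in> carrier_mat k m" and Y: "Y \<in> carrier_mat n m"
    and w: "w \<in> col_space X" "w \<in> col_space Y" "w \<noteq> 0\<^sub>v n"
  shows "rank (X * Z + Y) < rank X + rank Y"
proof -
  note CX = cols_subset_carrier[OF X] and CY = cols_subset_carrier[OF Y]
  have wc: "w \<in> carrier_vec n" using w(1) X unfolding col_space_eq[OF X] by auto
  obtain U1 where U1: "U1 \<subseteq> set (cols X)" "set (cols X) \<subseteq> span U1" "card U1 = rank X"
    using span_basis_extending[OF _ CX empty_subsetI lin_indpt_empty] unfolding rank_def by auto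
  have span_wY: "span (insert w (set (cols Y))) = span (set (cols Y))"
  proof
    show "span (insert w (set (cols Y))) \<subseteq> span (set (cols Y))"
      using span_subsetI[OF CY] w(2) in_own_span[OF CY] unfolding col_space_def by auto
  qed (rule span_is_monotone, auto)
  obtain U2 where U2: "w \<in> U2" "U2 \<subseteq> insert w (set (cols Y))"
      "insert w (set (cols Y)) \<subseteq> span U2" "card U2 = rank Y"
    using span_basis_extending[of "insert w (set (cols Y))" "{w}"] CY wc
      lin_indpt_singleton[OF wc w(3)]
    unfolding rank_def span_wY by auto
  let ?S = "U1 \<union> (U2 - {w})"
  have S: "finite ?S" "?S \<subseteq> carrier_vec n"
    using U1 U2 CX CY wc finite_subset[OF U1(1)] finite_subset[OF U2(2)] by auto
  have "span U1 \<subseteq> span ?S" by (rule span_is_monotone) auto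
  moreover have "w \<in> span U1"
    using w(1) span_subsetI[OF _ U1(2)] U1(1) CX unfolding col_space_def by blast
  ultimately have "U2 \<subseteq> span ?S" using in_own_span[OF S(2)] by blast
  then have "set (cols Y) \<subseteq> span ?S" using U2(3) span_subsetI[OF S(2)] by blast
  moreover have "set (cols X) \<subseteq> span ?S" using U1(2) \<open>span U1 \<subseteq> span ?S\<close> by auto
  moreover have "X * Z + Y \<in> carrier_mat n m" using X Z Y by auto
  ultimately have "rank (X * Z + Y) \<le> card ?S"
    using rank_le_card_of_cols_subset_span[OF _ S] cols_mult_add_subset_span[OF X Z Y S(2)]
    by blast
  also have "\<dots> \<le> card U1 + card (U2 - {w})" by (rule card_Un_le)
  also have "card (U2 - {w}) < card U2"
    using U2(1) finite_subset[OF U2(2)] by (intro card_Diff1_less) auto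
  finally show ?thesis using U1 U2 by simp
qed

end

lemma rank_plus_kernel_dim:
  fixes A :: "'a::field mat"
  assumes A: "A \<in> carrier_mat nr nc"
  shows "vec_space.rank nr A + kernel_dim A = nc"
proof -
  let ?T = "\<lambda>v. A *\<^sub>v v"
  interpret NC: vec_space "TYPE('a)" nc .
  interpret NR: vec_space "TYPE('a)" nr .
  interpret K: kernel nr nc A by (unfold_locales, rule A)
  have "?T \<in> LinearCombinations.module_hom class_ring
      (module_vec TYPE('a) nc) (module_vec TYPE('a) nr)"
    unfolding LinearCombinations.module_hom_def using A
    by (auto simp: module_vec_simps mult_add_distrib_mat_vec mult_mat_vec)
  then interpret L: linear_map class_ring "module_vec TYPE('a) nc" "module_vec TYPE('a) nr" ?T
    unfolding linear_map_def mod_hom_def mod_hom_axioms_def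
    using vec_vs vectorspace.axioms(1) by blast
  have im: "L.imT = NR.span (set (cols A))"
    using NR.col_space_eq[OF A] A unfolding L.im_def NR.col_space_def
    by (auto simp: module_vec_simps)
  have ker: "L.kerT = mat_kernel A"
    using A unfolding L.ker_def mat_kernel_def by (auto simp: module_vec_simps)
  have "vectorspace.dim class_ring (NR.vs L.imT) + vectorspace.dim class_ring (NC.vs L.kerT)
      = NC.dim"
    by (rule L.rank_nullity) simp
  then show ?thesis unfolding im ker NC.dim_is_n NR.rank_def using A by simp
qed

lemma rank_similar:
  fixes X :: "'a::field mat"
  assumes X: "X \<in> carrier_mat n n" and h: "h \<in> carrier_mat n n" and hi: "hi \<in> carrier_mat n n"
    and inv: "h * hi = 1\<^sub>m n"
  shows "vec_space.rank n (h * X * hi) = vec_space.rank n X"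
proof -
  have C: "h * X * hi \<in> carrier_mat n n" using X h hi by auto
  have "similar_mat_wit (h * X * hi) X h hi"
    unfolding similar_mat_wit_def Let_def
    using C X h hi inv mat_mult_left_right_inverse[OF h hi inv] by auto
  then have "kernel.dim n (h * X * hi) = kernel.dim n X"
    by (rule similar_mat_wit_kernel_dim[OF C])
  then have "kernel_dim (h * X * hi) = kernel_dim X"
    unfolding kernel_dim_def using C X hi by simp
  then show ?thesis using rank_plus_kernel_dim[OF C] rank_plus_kernel_dim[OF X] by simp
qed

lemma kernel_dim_zero_mat: "kernel_dim (0\<^sub>m m m :: 'a::field mat) = m"
proof -
  interpret V: vec_space "TYPE('a)" m .
  have "mat_kernel (0\<^sub>m m m :: 'a mat) = carrier_vec m" by (auto simp: mat_kernel_def)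
  then have "kernel_dim (0\<^sub>m m m :: 'a mat) = vectorspace.dim class_ring (V.vs (carrier_vec m))"
    unfolding kernel_dim_def by simp
  also have "V.vs (carrier_vec m) = V.V" unfolding module_vec_def by simp
  finally show ?thesis using V.dim_is_n by simp
qed

lemma rank_four_block_zero_mat:
  fixes X :: "'a::field mat"
  assumes X: "X \<in> carrier_mat n n"
  shows "vec_space.rank (n + m) (four_block_mat X (0\<^sub>m n m) (0\<^sub>m m n) (0\<^sub>m m m))
    = vec_space.rank n X"
proof -
  let ?A = "four_block_mat X (0\<^sub>m n m) (0\<^sub>m m n) (0\<^sub>m m m)"
  have A: "?A \<in> carrier_mat (n + m) (n + m)" using X by auto
  have "kernel.dim (n + m) ?A = kernel.dim n X + kernel.dim m (0\<^sub>m m m :: 'a mat)"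
    by (rule kernel_four_block_0_mat[OF refl X], auto)
  then have "kernel_dim ?A = kernel_dim X + m"
    using X A kernel_dim_zero_mat[of m] by (simp add: kernel_dim_def)
  then show ?thesis using rank_plus_kernel_dim[OF A] rank_plus_kernel_dim[OF X] by simp
qed

lemma mult_minus_one_eq:
  fixes a b :: "'a::field mat"
  assumes a: "a \<in> carrier_mat n n" and b: "b \<in> carrier_mat n n"
  shows "a * b - 1\<^sub>m n = (a - 1\<^sub>m n) * b + (b - 1\<^sub>m n)"
proof -
  have "(a - 1\<^sub>m n) * b = a * b - b" using a b by (subst minus_mult_distrib_mat[of _ n n], auto)
  then show ?thesis using a b by (intro eq_matI, auto)
qed

lemma rank_mult_minus_one_le:
  fixes a b :: "'a::field mat"
  assumes "a \<in> carrier_mat n n" "b \<in> carrier_mat n n"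
  shows "vec_space.rank n (a * b - 1\<^sub>m n) \<le> vec_space.rank n (a - 1\<^sub>m n) + vec_space.rank n (b - 1\<^sub>m n)"
  unfolding mult_minus_one_eq[OF assms] by (rule vec_space.rank_mult_add_le, use assms in auto)

lemma fixed_vec_of_rank_additive_mult:
  fixes a b :: "'a::field mat"
  assumes a: "a \<in> carrier_mat n n" and b: "b \<in> carrier_mat n n" and e: "e \<in> carrier_vec n"
    and fix_ab: "(a * b) *\<^sub>v e = e"
    and rk: "vec_space.rank n (a * b - 1\<^sub>m n)
      = vec_space.rank n (a - 1\<^sub>m n) + vec_space.rank n (b - 1\<^sub>m n)"
  shows "b *\<^sub>v e = e" "a *\<^sub>v e = e"
proof -
  have a1: "a - 1\<^sub>m n \<in> carrier_mat n n" and b1: "b - 1\<^sub>m n \<in> carrier_mat n n" using a b by auto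
  define w where "w = b *\<^sub>v e - e"
  have wb: "(b - 1\<^sub>m n) *\<^sub>v e = w"
    unfolding w_def using b e by (simp add: minus_mult_distrib_mat_vec)
  have "a *\<^sub>v (b *\<^sub>v e) = e" using fix_ab a b e by (simp add: assoc_mult_mat_vec)
  then have "(a - 1\<^sub>m n) *\<^sub>v (b *\<^sub>v e) = e - b *\<^sub>v e"
    using a b e by (simp add: minus_mult_distrib_mat_vec)
  then have wa: "(a - 1\<^sub>m n) *\<^sub>v ((-1) \<cdot>\<^sub>v (b *\<^sub>v e)) = w"
    using mult_mat_vec[OF a1, of "b *\<^sub>v e" "-1"] b e unfolding w_def
    by (auto intro!: eq_vecI)
  have wc: "w \<in> carrier_vec n" unfolding w_def using b e by simp
  have "w = 0\<^sub>v n"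
  proof (rule ccontr)
    assume "w \<noteq> 0\<^sub>v n"
    moreover have "w \<in> vec_space.col_space n (b - 1\<^sub>m n)"
      unfolding vec_space.col_space_eq[OF b1] using wc wb e b1 by auto
    moreover have "w \<in> vec_space.col_space n (a - 1\<^sub>m n)"
      unfolding vec_space.col_space_eq[OF a1] using wc wa b e a1 by force
    ultimately have "vec_space.rank n ((a - 1\<^sub>m n) * b + (b - 1\<^sub>m n))
        < vec_space.rank n (a - 1\<^sub>m n) + vec_space.rank n (b - 1\<^sub>m n)"
      by (intro vec_space.rank_mult_add_less[OF a1 b b1]) auto
    then show False using rk mult_minus_one_eq[OF a b] by simp
  qed
  moreover have "b *\<^sub>v e = w + e" unfolding w_def using b e by (intro eq_vecI) auto
  ultimately show be: "b *\<^sub>v e = e" using e by simp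
  show "a *\<^sub>v e = e" using fix_ab a b e be by (simp add: assoc_mult_mat_vec)
qed

lemma unitary_groupI:
  fixes a :: "'a::field mat"
  assumes a: "a \<in> carrier_mat n n" and u: "transpose_mat a * frob q a = 1\<^sub>m n"
  shows "a \<in> unitary_group q n"
proof -
  have fa: "frob q a \<in> carrier_mat n n" using a unfolding frob_def by auto
  have at: "transpose_mat a \<in> carrier_mat n n" using a by auto
  have "frob q a * transpose_mat a = 1\<^sub>m n" using mat_mult_left_right_inverse[OF at fa u] .
  then have "a * transpose_mat (frob q a) = 1\<^sub>m n"
    using transpose_mult[OF fa at] by (metis transpose_one transpose_transpose)
  moreover have "transpose_mat (frob q a) * a = 1\<^sub>m n"
    using transpose_mult[OF at fa] u by (metis transpose_one transpose_transpose)
  ultimately have "invertible_mat a"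
    unfolding invertible_mat_def inverts_mat_def
    using a fa by (intro conjI exI[of _ "transpose_mat (frob q a)"]) auto
  then show ?thesis unfolding unitary_group_def using a u by auto
qed

lemma unitary_groupD:
  assumes "a \<in> unitary_group q n"
  shows "a \<in> carrier_mat n n" "transpose_mat a * frob q a = 1\<^sub>m n"
  using assms unfolding unitary_group_def by auto

lemma one_mem_unitary_group: "q > 0 \<Longrightarrow> (1\<^sub>m n :: 'a::field mat) \<in> unitary_group q n"
  by (rule unitary_groupI) (auto simp: frob_def intro!: eq_matI)

lemma embed_mat_carrier [simp]: "g \<in> carrier_mat n n \<Longrightarrow> n \<le> N \<Longrightarrow> embed_mat n N g \<in> carrier_mat N N"
  unfolding embed_mat_def by auto

lemma embed_mat_mult:
  fixes a b :: "'a::field mat"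
  assumes "a \<in> carrier_mat n n" "b \<in> carrier_mat n n"
  shows "embed_mat n N a * embed_mat n N b = embed_mat n N (a * b)"
  unfolding embed_mat_def using assms
  by (subst mult_four_block_mat[of _ n n _ "N - n" _ "N - n"]) auto

lemma embed_mat_one: "n \<le> N \<Longrightarrow> embed_mat n N (1\<^sub>m n :: 'a::field mat) = 1\<^sub>m N"
  unfolding embed_mat_def by simp

lemma embed_mat_self: "g \<in> carrier_mat n n \<Longrightarrow> embed_mat n n g = g"
  unfolding embed_mat_def by (intro eq_matI) auto

lemma embed_mat_embed_mat:
  "g \<in> carrier_mat n n \<Longrightarrow> n \<le> m \<Longrightarrow> m \<le> N \<Longrightarrow> embed_mat m N (embed_mat n m g) = embed_mat n N g"
  unfolding embed_mat_def by (intro eq_matI) auto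

lemma embed_mat_inj:
  assumes "a \<in> carrier_mat n n" "b \<in> carrier_mat n n" "embed_mat n N a = embed_mat n N b"
  shows "a = b"
proof (rule eq_matI)
  fix i j assume "i < dim_row b" "j < dim_col b"
  moreover have "embed_mat n N a $$ (i, j) = embed_mat n N b $$ (i, j)" using assms(3) by simp
  ultimately show "a $$ (i, j) = b $$ (i, j)" using assms(1,2) unfolding embed_mat_def by auto
qed (use assms in auto)

lemma embed_mat_minus_one:
  "g \<in> carrier_mat n n \<Longrightarrow> n \<le> N \<Longrightarrow> embed_mat n N g - 1\<^sub>m N
    = four_block_mat (g - 1\<^sub>m n) (0\<^sub>m n (N - n)) (0\<^sub>m (N - n) n) (0\<^sub>m (N - n) (N - n))"
  unfolding embed_mat_def by (intro eq_matI) auto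

lemma rank_embed_mat_minus_one:
  fixes g :: "'a::field mat"
  assumes g: "g \<in> carrier_mat n n" and nN: "n \<le> N"
  shows "vec_space.rank N (embed_mat n N g - 1\<^sub>m N) = vec_space.rank n (g - 1\<^sub>m n)"
proof -
  have "g - 1\<^sub>m n \<in> carrier_mat n n" by (rule minus_carrier_mat) simp
  from rank_four_block_zero_mat[OF this, of "N - n"] show ?thesis
    using g nN by (simp add: embed_mat_minus_one)
qed

lemma embed_mat_fixes_last_unit_vec:
  fixes h :: "'a::field mat"
  assumes h: "h \<in> carrier_mat n n"
  shows "embed_mat n (Suc n) h *\<^sub>v unit_vec (Suc n) n = unit_vec (Suc n) n"
  using h unfolding embed_mat_def by (intro eq_vecI) (auto simp: less_Suc_eq)

lemma transpose_frob_embed_mat: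
  fixes a :: "'a::field mat"
  assumes a: "a \<in> carrier_mat n n" and q: "q > 0"
  shows "transpose_mat (embed_mat n N a) * frob q (embed_mat n N a)
       = embed_mat n N (transpose_mat a * frob q a)"
proof -
  have "frob q (embed_mat n N a) = embed_mat n N (frob q a)"
    unfolding frob_def embed_mat_def using a q by (intro eq_matI) auto
  moreover have "transpose_mat (embed_mat n N a) = embed_mat n N (transpose_mat a)"
    unfolding embed_mat_def using a by (intro eq_matI) auto
  ultimately show ?thesis using embed_mat_mult[of "transpose_mat a" n "frob q a"] a
    by (simp add: frob_def)
qed

lemma embed_mat_unitary:
  fixes a :: "'a::field mat"
  assumes a: "a \<in> unitary_group q n" and q: "q > 0" and nN: "n \<le> N"
  shows "embed_mat n N a \<in> unitary_group q N"
  using unitary_groupD[OF a] nN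
  by (intro unitary_groupI) (simp_all add: transpose_frob_embed_mat[OF _ q] embed_mat_one)

text \<open>The last row of a unitary matrix is orthogonal to its other columns (after Frobenius), so if
  its last column is \<open>e\<close>, its last row is \<open>e\<^sup>T\<close> as well.\<close>

lemma unitary_fixing_last_unit_vec:
  fixes A :: "'a::field mat"
  assumes A: "A \<in> unitary_group q (Suc n)" and q: "q > 0"
    and fix_e: "A *\<^sub>v unit_vec (Suc n) n = unit_vec (Suc n) n"
  obtains a where "a \<in> unitary_group q n" "A = embed_mat n (Suc n) a"
proof -
  note Ac = unitary_groupD(1)[OF A] and Au = unitary_groupD(2)[OF A]
  have col_A: "col A n = unit_vec (Suc n) n"
  proof (rule eq_vecI)
    fix i assume "i < dim_vec (unit_vec (Suc n) n)"
    moreover have "(A *\<^sub>v unit_vec (Suc n) n) $ i = unit_vec (Suc n) n $ i" using fix_e by simp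
    ultimately show "col A n $ i = unit_vec (Suc n) n $ i" using Ac by simp
  qed (use Ac in simp)
  have last_row: "A $$ (n, j) = 0" if j: "j < n" for j
  proof -
    have "0 = (transpose_mat A * frob q A) $$ (n, j)" using Au j by simp
    also have "\<dots> = col A n \<bullet> col (frob q A) j" using Ac j by (simp add: frob_def)
    also have "\<dots> = A $$ (n, j) ^ q"
      unfolding col_A using Ac j
      by (subst scalar_prod_left_unit) (auto simp: frob_def intro!: col_carrier_vec[of j "Suc n"])
    finally show ?thesis using q by simp
  qed
  define a where "a = mat n n (\<lambda>(i, j). A $$ (i, j))"
  have ac: "a \<in> carrier_mat n n" unfolding a_def by auto
  have Aa: "A = embed_mat n (Suc n) a"
  proof (rule eq_matI)
    fix i j assume "i < dim_row (embed_mat n (Suc n) a)" "j < dim_col (embed_mat n (Suc n) a)"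
    then show "A $$ (i, j) = embed_mat n (Suc n) a $$ (i, j)"
      using Ac last_row arg_cong[OF col_A, of "\<lambda>v. v $ i"]
      unfolding embed_mat_def a_def by (auto simp: less_Suc_eq)
  qed (use Ac embed_mat_carrier[OF ac, of "Suc n"] in auto)
  have "embed_mat n (Suc n) (transpose_mat a * frob q a) = transpose_mat A * frob q A"
    using transpose_frob_embed_mat[OF ac q] Aa by simp
  also have "\<dots> = embed_mat n (Suc n) (1\<^sub>m n)" unfolding Au by (rule embed_mat_one[symmetric]) simp
  finally have "transpose_mat a * frob q a = 1\<^sub>m n"
    by (rule embed_mat_inj[rotated 2]) (use ac in \<open>auto simp: frob_def\<close>)
  then show thesis using that unitary_groupI[OF ac] Aa by auto
qed

lemma conj_in_refl: "x \<in> carrier_mat N N \<Longrightarrow> q > 0 \<Longrightarrow> conj_in (unitary_group q N) x x"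
  unfolding conj_in_def using one_mem_unitary_group[of q N] by (intro bexI[of _ "1\<^sub>m N"]) auto

lemma conj_in_embed_mat:
  fixes x y :: "'a::field mat"
  assumes c: "conj_in (unitary_group q N) x y" and x: "x \<in> carrier_mat N N" and q: "q > 0"
    and NM: "N \<le> M"
  shows "conj_in (unitary_group q M) (embed_mat N M x) (embed_mat N M y)"
proof -
  obtain h hi where h: "h \<in> unitary_group q N" and hi: "hi \<in> unitary_group q N"
    and inv: "h * hi = 1\<^sub>m (dim_row h)" and hxhi: "h * x * hi = y"
    using c unfolding conj_in_def by auto
  note hc = unitary_groupD(1)[OF h] and hic = unitary_groupD(1)[OF hi]
  have "embed_mat N M h * embed_mat N M hi = 1\<^sub>m M"
    using embed_mat_mult[OF hc hic] inv hc embed_mat_one[OF NM] by simp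
  moreover have "embed_mat N M h * embed_mat N M x * embed_mat N M hi = embed_mat N M y"
    using embed_mat_mult[OF hc x] embed_mat_mult[OF _ hic, of "h * x"] hc x hxhi by simp
  ultimately show ?thesis unfolding conj_in_def
    using embed_mat_unitary[OF h q NM] embed_mat_unitary[OF hi q NM] embed_mat_carrier[OF hc NM]
    by (metis carrier_matD(1))
qed

lemma same_utype_iff:
  "same_utype q (n, g) (n', g') \<longleftrightarrow> g \<in> unitary_group q n \<and> g' \<in> unitary_group q n' \<and>
      (\<exists>N \<ge> max n n'. conj_in (unitary_group q N) (embed_mat n N g) (embed_mat n' N g'))"
  unfolding same_utype_def by simp

lemma self_mem_utype: "g \<in> unitary_group q n \<Longrightarrow> q > 0 \<Longrightarrow> (n, g) \<in> utype q n g"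
  unfolding utype_def same_utype_iff mem_Collect_eq
  using conj_in_refl embed_mat_self unitary_groupD(1) by (metis max.idem order_refl)

lemma utype_embed_mat:
  fixes g :: "'a::field mat"
  assumes g: "g \<in> unitary_group q n" and q: "q > 0" and nN: "n \<le> N"
  shows "utype q N (embed_mat n N g) = utype q n g"
proof -
  note gc = unitary_groupD(1)[OF g]
  have "same_utype q (N, embed_mat n N g) (n', g') \<longleftrightarrow> same_utype q (n, g) (n', g')" for n' g'
  proof
    assume "same_utype q (N, embed_mat n N g) (n', g')"
    then obtain M where g': "g' \<in> unitary_group q n'" and M: "M \<ge> max N n'"
      and "conj_in (unitary_group q M) (embed_mat N M (embed_mat n N g)) (embed_mat n' M g')"
      unfolding same_utype_iff by auto
    then show "same_utype q (n, g) (n', g')"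
      unfolding same_utype_iff embed_mat_embed_mat[OF gc nN] using g nN M
      by (intro conjI exI[of _ M]) (auto simp: embed_mat_embed_mat[OF gc nN])
  next
    assume "same_utype q (n, g) (n', g')"
    then obtain M where g': "g' \<in> unitary_group q n'" and M: "M \<ge> max n n'"
      and c: "conj_in (unitary_group q M) (embed_mat n M g) (embed_mat n' M g')"
      unfolding same_utype_iff by auto
    note g'c = unitary_groupD(1)[OF g']
    define M' where "M' = max M N"
    have "conj_in (unitary_group q M') (embed_mat M M' (embed_mat n M g))
        (embed_mat M M' (embed_mat n' M g'))"
      using gc M by (intro conj_in_embed_mat[OF c _ q]) (auto simp: M'_def)
    then have "conj_in (unitary_group q M') (embed_mat N M' (embed_mat n N g)) (embed_mat n' M' g')"
      using M nN gc g'c by (simp add: M'_def embed_mat_embed_mat)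
    then show "same_utype q (N, embed_mat n N g) (n', g')"
      unfolding same_utype_iff using embed_mat_unitary[OF g q nN] g' M
      by (intro conjI exI[of _ M']) (auto simp: M'_def)
  qed
  then show ?thesis unfolding utype_def by auto
qed

lemma rank_minus_one_of_mem_utype:
  fixes g :: "'a::field mat"
  assumes g: "g \<in> unitary_group q n" and y: "(n', g') \<in> utype q n g"
  shows "vec_space.rank n' (g' - 1\<^sub>m n') = vec_space.rank n (g - 1\<^sub>m n)"
proof -
  obtain M where g': "g' \<in> unitary_group q n'" and M: "M \<ge> max n n'"
      and "conj_in (unitary_group q M) (embed_mat n M g) (embed_mat n' M g')"
    using y unfolding utype_def mem_Collect_eq same_utype_iff by auto
  then obtain h hi where h: "h \<in> unitary_group q M" and hi: "hi \<in> unitary_group q M"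
    and inv: "h * hi = 1\<^sub>m (dim_row h)" and hghi: "h * embed_mat n M g * hi = embed_mat n' M g'"
    unfolding conj_in_def by auto
  note hc = unitary_groupD(1)[OF h] and hic = unitary_groupD(1)[OF hi]
  note gc = unitary_groupD(1)[OF g] and g'c = unitary_groupD(1)[OF g']
  have inv': "h * hi = 1\<^sub>m M" using inv hc by simp
  define X where "X = embed_mat n M g"
  have X: "X \<in> carrier_mat M M" unfolding X_def using gc M by simp
  have "h * (X - 1\<^sub>m M) * hi = h * X * hi - h * hi"
    using X hc hic by (simp add: mult_minus_distrib_mat minus_mult_distrib_mat[of _ M M])
  then have "h * (X - 1\<^sub>m M) * hi = embed_mat n' M g' - 1\<^sub>m M"
    using hghi inv' unfolding X_def by simp
  then have "vec_space.rank M (embed_mat n' M g' - 1\<^sub>m M) = vec_space.rank M (X - 1\<^sub>m M)"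
    using rank_similar[OF _ hc hic inv'] X by (metis minus_carrier_mat one_carrier_mat)
  then show ?thesis
    using rank_embed_mat_minus_one[OF gc] rank_embed_mat_minus_one[OF g'c] M
    unfolding X_def by simp
qed

lemma utype_size_utype:
  fixes g :: "'a::field mat"
  assumes g: "g \<in> unitary_group q n" and q: "q > 0"
  shows "utype_size (utype q n g) = vec_space.rank n (g - 1\<^sub>m n)"
  unfolding utype_size_def
proof (rule some_equality)
  show "\<exists>(n', g')\<in>utype q n g. vec_space.rank n (g - 1\<^sub>m n) = vec_space.rank n' (g' - 1\<^sub>m n')"
    using self_mem_utype[OF g q] by auto
qed (use rank_minus_one_of_mem_utype[OF g] in auto)

definition factorizations ::
    "nat \<Rightarrow> nat \<Rightarrow> (nat \<times> 'a::field mat) set \<Rightarrow> (nat \<times> 'a mat) set \<Rightarrow> 'a mat \<Rightarrow> ('a mat \<times> 'a mat) set"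
  where "factorizations q n mu nu h = {(a, b). a \<in> unitary_group q n \<and> b \<in> unitary_group q n \<and>
      utype q n a = mu \<and> utype q n b = nu \<and> a * b = h}"

lemma prod_coeff_eq_card_factorizations:
  "prod_coeff q n mu nu h = card (factorizations q n mu nu h)"
  unfolding prod_coeff_def factorizations_def ..

lemma factorizations_eq_empty_of_rank_gt:
  fixes h :: "'a::field mat"
  assumes rk: "vec_space.rank n (h - 1\<^sub>m n) > utype_size mu + utype_size nu" and q: "q > 0"
  shows "factorizations q n mu nu h = {}"
proof (rule ccontr)
  assume "factorizations q n mu nu h \<noteq> {}"
  then obtain a b where a: "a \<in> unitary_group q n" and b: "b \<in> unitary_group q n"
    and "utype q n a = mu" "utype q n b = nu" "a * b = h"
    unfolding factorizations_def by auto
  then show False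
    using rk rank_mult_minus_one_le[OF unitary_groupD(1)[OF a] unitary_groupD(1)[OF b]]
      utype_size_utype[OF a q] utype_size_utype[OF b q] by simp
qed

lemma factorizations_embed_mat:
  fixes h :: "'a::field mat"
  assumes h: "h \<in> unitary_group q n" and q: "q > 0"
    and rk: "vec_space.rank n (h - 1\<^sub>m n) = utype_size mu + utype_size nu"
  shows "factorizations q (Suc n) mu nu (embed_mat n (Suc n) h)
    = map_prod (embed_mat n (Suc n)) (embed_mat n (Suc n)) ` factorizations q n mu nu h"
proof (intro equalityI subsetI)
  fix AB assume "AB \<in> factorizations q (Suc n) mu nu (embed_mat n (Suc n) h)"
  then obtain A B where AB: "AB = (A, B)" and A: "A \<in> unitary_group q (Suc n)"
    and B: "B \<in> unitary_group q (Suc n)" and mu: "utype q (Suc n) A = mu"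
    and nu: "utype q (Suc n) B = nu" and prod: "A * B = embed_mat n (Suc n) h"
    unfolding factorizations_def by auto
  note hc = unitary_groupD(1)[OF h] and Ac = unitary_groupD(1)[OF A]
    and Bc = unitary_groupD(1)[OF B]
  have "vec_space.rank (Suc n) (A * B - 1\<^sub>m (Suc n))
      = vec_space.rank (Suc n) (A - 1\<^sub>m (Suc n)) + vec_space.rank (Suc n) (B - 1\<^sub>m (Suc n))"
    using rank_embed_mat_minus_one[OF hc, of "Suc n"] rk prod mu nu
      utype_size_utype[OF A q] utype_size_utype[OF B q] by simp
  from fixed_vec_of_rank_additive_mult[OF Ac Bc _ _ this, of "unit_vec (Suc n) n"]
  have "B *\<^sub>v unit_vec (Suc n) n = unit_vec (Suc n) n" "A *\<^sub>v unit_vec (Suc n) n = unit_vec (Suc n) n"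
    using prod embed_mat_fixes_last_unit_vec[OF hc] by auto
  then obtain a b where a: "a \<in> unitary_group q n" "A = embed_mat n (Suc n) a"
    and b: "b \<in> unitary_group q n" "B = embed_mat n (Suc n) b"
    using unitary_fixing_last_unit_vec[OF A q] unitary_fixing_last_unit_vec[OF B q] by metis
  note ac = unitary_groupD(1)[OF a(1)] and bc = unitary_groupD(1)[OF b(1)]
  have "a * b = h"
    using prod a b ac bc embed_mat_mult[OF ac bc] by (intro embed_mat_inj[OF _ hc]) auto
  then have "(a, b) \<in> factorizations q n mu nu h"
    using a b mu nu utype_embed_mat[OF a(1) q] utype_embed_mat[OF b(1) q]
    unfolding factorizations_def by auto
  then show "AB \<in> map_prod (embed_mat n (Suc n)) (embed_mat n (Suc n)) ` factorizations q n mu nu h"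
    unfolding AB a b by force
next
  fix AB assume "AB \<in> map_prod (embed_mat n (Suc n)) (embed_mat n (Suc n)) ` factorizations q n mu nu h"
  then obtain a b where AB: "AB = (embed_mat n (Suc n) a, embed_mat n (Suc n) b)"
    and a: "a \<in> unitary_group q n" and b: "b \<in> unitary_group q n"
    and "utype q n a = mu" "utype q n b = nu" "a * b = h"
    unfolding factorizations_def by auto
  then show "AB \<in> factorizations q (Suc n) mu nu (embed_mat n (Suc n) h)"
    unfolding factorizations_def
    using embed_mat_unitary[OF a q] embed_mat_unitary[OF b q] utype_embed_mat[OF a q]
      utype_embed_mat[OF b q] embed_mat_mult[OF unitary_groupD(1)[OF a] unitary_groupD(1)[OF b]]
    by auto
qed

lemma card_factorizations_embed_mat:
  fixes h :: "'a::field mat"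
  assumes h: "h \<in> unitary_group q m" and q: "q > 0" and mn: "m \<le> n"
    and rk: "vec_space.rank m (h - 1\<^sub>m m) = utype_size mu + utype_size nu"
  shows "card (factorizations q n mu nu (embed_mat m n h)) = card (factorizations q m mu nu h)"
  using mn
proof (induction n rule: dec_induct)
  case base
  show ?case using embed_mat_self[OF unitary_groupD(1)[OF h]] by simp
next
  case (step n)
  note hc = unitary_groupD(1)[OF h]
  let ?h = "embed_mat m n h"
  have hn: "?h \<in> unitary_group q n" by (rule embed_mat_unitary[OF h q step(1)])
  have "inj_on (map_prod (embed_mat n (Suc n)) (embed_mat n (Suc n)))
      (factorizations q n mu nu ?h)"
    by (rule inj_on_subset[OF map_prod_inj_on, of _ "carrier_mat n n" _ "carrier_mat n n"])
      (auto simp: factorizations_def inj_on_def dest: embed_mat_inj unitary_groupD(1))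
  then have "card (factorizations q (Suc n) mu nu (embed_mat n (Suc n) ?h))
      = card (factorizations q n mu nu ?h)"
    using factorizations_embed_mat[OF hn q] rank_embed_mat_minus_one[OF hc step(1)] rk
    by (simp add: card_image)
  then show ?case
    using embed_mat_embed_mat[OF hc step(1)] step(3) by simp
qed

lemma prime_power_ge_2: "prime_power q \<Longrightarrow> q \<ge> 2"
  unfolding prime_power_def using prime_ge_2_nat self_le_power
  by (metis dual_order.trans less_imp_le_nat neq0_conv one_le_numeral)

lemma inj_qint:
  assumes q: "q \<ge> 2"
  shows "inj (qint q)"
proof (rule injI)
  fix a b assume "qint q a = qint q b"
  moreover have "(- of_nat q - 1 :: rat) \<noteq> 0" using q by simp
  ultimately have "(- of_nat q :: rat) ^ a = (- of_nat q) ^ b" unfolding qint_def by simp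
  then have "\<bar>- of_nat q :: rat\<bar> ^ a = \<bar>- of_nat q\<bar> ^ b" by (metis power_abs)
  then have "q ^ a = q ^ b" by (metis abs_minus_cancel abs_of_nat of_nat_eq_iff of_nat_power)
  then show "a = b" using q by (simp add: power_inject_exp)
qed

lemma poly_eq_0_of_vanishing_on_inj_seq:
  fixes p :: "'a::idom poly" and f :: "nat \<Rightarrow> 'a"
  assumes f: "inj f" and z: "\<And>n. n \<ge> m \<Longrightarrow> poly p (f n) = 0"
  shows "p = 0"
proof (rule ccontr)
  assume "p \<noteq> 0"
  then have "finite (range (\<lambda>k. f (m + k)))"
    using poly_roots_finite z by (metis (mono_tags, lifting) finite_subset image_subset_iff le_add1 mem_Collect_eq)
  moreover have "inj (\<lambda>k. f (m + k))" using f unfolding inj_def by (metis add_left_cancel)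
  ultimately show False using finite_imageD by blast
qed

theorem theorem8p7:
  fixes q :: nat
    and TYPE_F :: "'a::{field, finite} itself"
    and r :: "(nat \<times> 'a mat) set \<Rightarrow> (nat \<times> 'a mat) set \<Rightarrow> (nat \<times> 'a mat) set \<Rightarrow> rat poly"
  assumes q: "prime_power q"
    and card: "card (UNIV :: 'a set) = q ^ 2"
    and r_in_R: "\<And>mu nu la. mu \<in> utypes q TYPE('a) \<Longrightarrow> nu \<in> utypes q TYPE('a) \<Longrightarrow>
                   la \<in> utypes q TYPE('a) \<Longrightarrow> r mu nu la \<in> R_minus_q q"
    and r_struct: "\<And>mu nu n h. mu \<in> utypes q TYPE('a) \<Longrightarrow> nu \<in> utypes q TYPE('a) \<Longrightarrow>
                   h \<in> (unitary_group q n :: 'a mat set) \<Longrightarrow>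
                   of_nat (prod_coeff q n mu nu h) = poly (r mu nu (utype q n h)) (qint q n)"
  shows "\<forall>mu \<in> utypes q TYPE('a). \<forall>nu \<in> utypes q TYPE('a). \<forall>la \<in> utypes q TYPE('a).
           (utype_size la > utype_size mu + utype_size nu \<longrightarrow> r mu nu la = 0) \<and>
           (utype_size la = utype_size mu + utype_size nu \<longrightarrow> (\<exists>c::int. r mu nu la = [:of_int c:]))"
proof (intro ballI)
  have q2: "q \<ge> 2" using q by (rule prime_power_ge_2)
  then have q0: "q > 0" by simp
  fix mu nu la assume mu: "mu \<in> utypes q TYPE('a)" and nu: "nu \<in> utypes q TYPE('a)"
    and "la \<in> utypes q TYPE('a)"
  then obtain m and h :: "'a mat" where h: "h \<in> unitary_group q m" and la: "la = utype q m h"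
    unfolding utypes_def by auto
  have size_la: "utype_size la = vec_space.rank m (h - 1\<^sub>m m)"
    using utype_size_utype[OF h q0] la by simp
  have coeff: "poly (r mu nu la) (qint q n) = of_nat (card (factorizations q n mu nu (embed_mat m n h)))"
    if "m \<le> n" for n
    using r_struct[OF mu nu embed_mat_unitary[OF h q0 that]] utype_embed_mat[OF h q0 that] la
    by (simp add: prod_coeff_eq_card_factorizations)
  have "r mu nu la = 0" if "utype_size la > utype_size mu + utype_size nu"
  proof (rule poly_eq_0_of_vanishing_on_inj_seq[OF inj_qint[OF q2]])
    fix n assume "m \<le> n"
    then have "factorizations q n mu nu (embed_mat m n h) = {}"
      using rank_embed_mat_minus_one[OF unitary_groupD(1)[OF h] \<open>m \<le> n\<close>] that size_la
      by (intro factorizations_eq_empty_of_rank_gt[OF _ q0]) simp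
    then show "poly (r mu nu la) (qint q n) = 0" using coeff[OF \<open>m \<le> n\<close>] by simp
  qed
  moreover have "\<exists>c::int. r mu nu la = [:of_int c:]" if "utype_size la = utype_size mu + utype_size nu"
  proof -
    define c where "c = card (factorizations q m mu nu h)"
    have "r mu nu la - [:of_nat c:] = 0"
      using coeff card_factorizations_embed_mat[OF h q0] that size_la
      by (intro poly_eq_0_of_vanishing_on_inj_seq[OF inj_qint[OF q2]]) (simp add: c_def)
    then show ?thesis by (intro exI[of _ "int c"]) simp
  qed
  ultimately show "(utype_size la > utype_size mu + utype_size nu \<longrightarrow> r mu nu la = 0) \<and>
      (utype_size la = utype_size mu + utype_size nu \<longrightarrow> (\<exists>c::int. r mu nu la = [:of_int c:]))"
    by blast
qed

end
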